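(* Let $p$ be a prime, $q=p^l$, $m\ge1$, $n=2m$. For any $r$ with $0\leqslant r<n(q-1)$ and any $I\subseteq M_r$, with $\overline{I}=M_r\setminus I$, \begin{align*} \dim(\mathcal{C}_q(r,I,n))&=\sum_{i=0}^n(-1)^i\binom{n}{i}\binom{n+r-iq}{r-iq}\\ &\quad-2\sum_{k\in\overline{I},\,k\neq0}\left(\sum_{i=0}^{m}(-1)^i\binom{m}{i}\binom{\frac{n(q-1)-r-k}{2}-iq+m-1}{\frac{n(q-1)-r-k}{2}-iq}\right)\left(\sum_{i=0}^{m}(-1)^i\binom{m}{i}\binom{\frac{n(q-1)-r+k}{2}-iq+m-1}{\frac{n(q-1)-r+k}{2}-iq}\right)\\ &\quad-\mathbf{1}_{\overline{I}}(0)\left(\sum_{i=0}^{m}(-1)^i\binom{m}{i}\binom{\frac{n(q-1)-r}{2}-iq+m-1}{\frac{n(q-1)-r}{2}-iq}\right)^2, \end{align*} where $\mathbf{1}_{\overline{I}}(0)=1$ if $0\in\overline{I}$ and $0$ otherwise.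
   Context: Let $N=q^n-1$ and $\alpha$ a primitive element of $\mathbb{F}_{q^n}$. Every integer $0\le u\le q^n-1$ is written $u=\sum_{i=0}^{n-1}u_iq^i$, $u_i\in\{0,\dots,q-1\}$; $\mathrm{wt}_q(u)=\sum u_i$, $O(u)=\sum_{i\text{ odd}}u_i$, $E(u)=\sum_{i\text{ even}}u_i$. For $-1\le r<n(q-1)$, $Z_r=\{\alpha^u\mid 0<u\le q^n-1,\ \mathrm{wt}_q(u)\le n(q-1)-r-1\}$. For $0\le r\le n(q-1)$ and integer $k\ge0$, $\Theta^{(r)}_k=\{\alpha^u\mid 0\le u\le q^n-1,\ \mathrm{wt}_q(u)=n(q-1)-r,\ |O(u)-E(u)|=k\}$. $M_r$ is the set of even (resp. odd) integers $k\in[0,m(q-1)]$ when $r$ is even (resp. odd). For $I\subseteq M_r$, $\overline I=M_r\setminus I$ and $Z_{r,I}=Z_r\cup\bigcup_{k\in\overline I}\Theta^{(r)}_k$. A cyclic code of length $N$ over $\mathbb{F}_q$ with zero set $Z\subseteq\mathbb{F}_{q^n}^*$ is $\{(c_0,\dots,c_{N-1})\in\mathbb{F}_q^N\mid \sum_{i=0}^{N-1}c_i\beta^i=0\ \forall\beta\in Z\}$. $\mathcal{C}_q(r,I,n)^*$ is the cyclic code with zero set $Z_{r,I}$, and $\mathcal{C}_q(r,I,n)\subseteq\mathbb{F}_q^{q^n}$ is its extended code, obtained by appending to each codeword $c$ the coordinate $-\sum_{i}c_i$. Binomial coefficients $\binom ab$ with $b<0$ are $0$. *)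

theory Defs
  imports Complex_Main "HOL-Computational_Algebra.Primes"
begin

definition digit :: "nat \<Rightarrow> nat \<Rightarrow> nat \<Rightarrow> nat" where
  "digit q u i = (u div q ^ i) mod q"

definition wt_q :: "nat \<Rightarrow> nat \<Rightarrow> nat \<Rightarrow> nat" where
  "wt_q q n u = (\<Sum>i<n. digit q u i)"

definition O_q :: "nat \<Rightarrow> nat \<Rightarrow> nat \<Rightarrow> nat" where
  "O_q q n u = (\<Sum>i\<in>{i. i < n \<and> odd i}. digit q u i)"

definition E_q :: "nat \<Rightarrow> nat \<Rightarrow> nat \<Rightarrow> nat" where
  "E_q q n u = (\<Sum>i\<in>{i. i < n \<and> even i}. digit q u i)"

definition Z_set :: "nat \<Rightarrow> nat \<Rightarrow> 'a::field \<Rightarrow> nat \<Rightarrow> 'a set" where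
  "Z_set q n \<alpha> r = {\<alpha> ^ u | u. 0 < u \<and> u \<le> q ^ n - 1 \<and>
      int (wt_q q n u) \<le> int n * (int q - 1) - int r - 1}"

definition Theta :: "nat \<Rightarrow> nat \<Rightarrow> 'a::field \<Rightarrow> nat \<Rightarrow> nat \<Rightarrow> 'a set" where
  "Theta q n \<alpha> r k = {\<alpha> ^ u | u. u \<le> q ^ n - 1 \<and>
      int (wt_q q n u) = int n * (int q - 1) - int r \<and>
      \<bar>int (O_q q n u) - int (E_q q n u)\<bar> = int k}"

definition M_set :: "nat \<Rightarrow> nat \<Rightarrow> nat \<Rightarrow> nat set" where
  "M_set q m r = {k. k \<le> m * (q - 1) \<and> (even k \<longleftrightarrow> even r)}"

definition Z_rI :: "nat \<Rightarrow> nat \<Rightarrow> nat \<Rightarrow> 'a::field \<Rightarrow> nat \<Rightarrow> nat set \<Rightarrow> 'a set" where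
  "Z_rI q m n \<alpha> r I = Z_set q n \<alpha> r \<union> (\<Union>k\<in>M_set q m r - I. Theta q n \<alpha> r k)"

definition is_subfield :: "'a::field set \<Rightarrow> bool" where
  "is_subfield K \<longleftrightarrow> 0 \<in> K \<and> 1 \<in> K \<and> (\<forall>x\<in>K. \<forall>y\<in>K. x + y \<in> K \<and> x * y \<in> K)
     \<and> (\<forall>x\<in>K. - x \<in> K) \<and> (\<forall>x\<in>K. x \<noteq> 0 \<longrightarrow> inverse x \<in> K)"

definition primitive_elem :: "'a::{field,finite} \<Rightarrow> bool" where
  "primitive_elem \<alpha> \<longleftrightarrow> (\<forall>x::'a. x \<noteq> 0 \<longrightarrow> (\<exists>u::nat. x = \<alpha> ^ u))"

definition words :: "'a::field set \<Rightarrow> nat \<Rightarrow> (nat \<Rightarrow> 'a) set" where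
  "words K L = {c. (\<forall>i<L. c i \<in> K) \<and> (\<forall>i\<ge>L. c i = 0)}"

definition cyclic_code :: "'a::field set \<Rightarrow> nat \<Rightarrow> 'a set \<Rightarrow> (nat \<Rightarrow> 'a) set" where
  "cyclic_code K N Z = {c \<in> words K N. \<forall>\<beta>\<in>Z. (\<Sum>i<N. c i * \<beta> ^ i) = 0}"

definition extend_code :: "nat \<Rightarrow> (nat \<Rightarrow> 'a::field) set \<Rightarrow> (nat \<Rightarrow> 'a) set" where
  "extend_code N C = (\<lambda>c. c(N := - (\<Sum>i<N. c i))) ` C"

definition kspan :: "'a::field set \<Rightarrow> nat \<Rightarrow> (nat \<Rightarrow> nat \<Rightarrow> 'a) \<Rightarrow> (nat \<Rightarrow> 'a) set" where
  "kspan K d v = {(\<lambda>j. \<Sum>i<d. a i * v i j) | a. \<forall>i<d. a i \<in> K}"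

definition code_dim :: "'a::field set \<Rightarrow> (nat \<Rightarrow> 'a) set \<Rightarrow> nat" where
  "code_dim K C = (LEAST d. \<exists>v. C = kspan K d v)"

definition C_code :: "'a::field set \<Rightarrow> nat \<Rightarrow> nat \<Rightarrow> nat \<Rightarrow> 'a \<Rightarrow> nat \<Rightarrow> nat set \<Rightarrow> (nat \<Rightarrow> 'a) set" where
  "C_code K q m n \<alpha> r I = extend_code (q ^ n - 1) (cyclic_code K (q ^ n - 1) (Z_rI q m n \<alpha> r I))"

definition binomZ :: "int \<Rightarrow> int \<Rightarrow> int" where
  "binomZ a b = (if b < 0 then 0 else \<lfloor>(real_of_int a) gchoose (nat b)\<rfloor>)"

definition Sm :: "nat \<Rightarrow> nat \<Rightarrow> int \<Rightarrow> int" where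
  "Sm q m A = (\<Sum>i\<le>m. (-1) ^ i * int (m choose i) *
      binomZ (A - int i * int q + int m - 1) (A - int i * int q))"

end

theory Submission
  imports Defs "HOL-Library.FuncSet" "HOL-Computational_Algebra.Polynomial"
    "HOL-Computational_Algebra.Formal_Power_Series"
begin

text \<open>
  Extending a code does not change its dimension, and a cyclic code of length \<open>N = q\<^sup>n - 1\<close> whose
  zero set \<open>Z \<subseteq> F\<^sup>*\<close> is closed under the Frobenius map \<open>x \<mapsto> x\<^sup>q\<close> has exactly \<open>q\<^bsup>N - |Z|\<^esup>\<close>
  words. Evaluating the \<open>q\<^sup>N\<close> words at \<open>Z\<close> gives maps on \<open>Z\<close> commuting with Frobenius, and there
  are at most \<open>q\<^bsup>|Z|\<^esup>\<close> of them: on a Frobenius orbit of length \<open>s\<close> such a map is determined by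
  its value at one point, which is a root of \<open>x\<^bsup>q\<^sup>s\<^esup> = x\<close>. Conversely the codes of \<open>Z\<close> and of
  its complement in \<open>F\<^sup>*\<close> meet only in \<open>0\<close>, as no nonzero word of length \<open>N\<close> vanishes on all of \<open>F\<^sup>*\<close>.

  The zero set of \<open>\<C>\<^sub>q(r, I, n)\<^sup>*\<close> is \<open>{\<alpha>\<^sup>u | u \<in> S}\<close> for an explicit set \<open>S\<close> of exponents.
  Frobenius maps \<open>\<alpha>\<^sup>u\<close> to \<open>\<alpha>\<^bsup>qu\<^esup>\<close>, and multiplying by \<open>q\<close> modulo \<open>q\<^sup>n - 1\<close> rotates the base-\<open>q\<close>
  digits of \<open>u\<close> cyclically; since \<open>n\<close> is even this swaps \<open>O(u)\<close> and \<open>E(u)\<close>, so the zero set is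
  Frobenius-closed and the dimension is \<open>N - |S|\<close>. Finally \<open>|S|\<close> is counted by digit sums: the
  number of \<open>u < q\<^sup>n\<close> with digit sum \<open>s\<close> is the coefficient of \<open>x\<^sup>s\<close> in \<open>((1 - x\<^sup>q) / (1 - x))\<^sup>n\<close>,
  which yields the alternating binomial sums, and the exponents in \<open>\<Theta>\<^sub>k\<close> are those whose digit
  sums over the \<open>m\<close> even and the \<open>m\<close> odd positions are \<open>(W - k)/2\<close> and \<open>(W + k)/2\<close> in either
  order, where \<open>W = n(q - 1) - r\<close>.
\<close>

section \<open>Finite fields and subfields\<close>

lemma mult_closed_power_card_eq_1:
  fixes G :: "'a::field set"
  assumes fin: "finite G" and no_zero: "0 \<notin> G"
    and closed: "\<And>x y. x \<in> G \<Longrightarrow> y \<in> G \<Longrightarrow> x * y \<in> G" and x: "x \<in> G"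
  shows "x ^ card G = 1"
proof -
  have inj: "inj_on ((*) x) G"
    using x no_zero by (auto simp: inj_on_def)
  have "(*) x ` G = G"
    using closed x by (intro card_subset_eq[OF fin _ card_image[OF inj]]) auto
  then have "prod id G = prod id ((*) x ` G)" by simp
  also have "\<dots> = x ^ card G * prod id G"
    by (simp add: prod.reindex[OF inj] prod.distrib)
  finally have "prod id G * 1 = prod id G * x ^ card G" by (simp add: mult.commute)
  moreover have "prod id G \<noteq> 0" using no_zero fin by auto
  ultimately show ?thesis by (metis mult_left_cancel)
qed

lemma mult_closed_power_card_eq_self:
  fixes G :: "'a::field set"
  assumes fin: "finite G" and zero: "0 \<in> G"
    and closed: "\<And>x y. x \<in> G \<Longrightarrow> y \<in> G \<Longrightarrow> x * y \<in> G" and x: "x \<in> G"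
  shows "x ^ card G = x"
proof (cases "x = 0")
  case True
  moreover have "card G \<noteq> 0" using fin zero by auto
  ultimately show ?thesis by simp
next
  case False
  have "x ^ card (G - {0}) = 1"
    by (rule mult_closed_power_card_eq_1) (use fin closed x False in auto)
  moreover have "card G = Suc (card (G - {0}))"
    using fin zero by (metis card_Suc_Diff1)
  ultimately show ?thesis by simp
qed

lemma card_power_fixed_points_le:
  assumes "2 \<le> M"
  shows "card {x :: 'a::idom. x ^ M = x} \<le> M"
proof -
  define P :: "'a poly" where "P = monom 1 M - [:0, 1:]"
  have "coeff P M = 1"
    using assms by (simp add: P_def coeff_pCons split: nat.split)
  then have "P \<noteq> 0" by auto
  moreover have "degree P \<le> M"
    unfolding P_def by (rule order.trans[OF degree_diff_le_max]) (use assms in \<open>auto simp: degree_monom_eq\<close>)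
  moreover have "{x. x ^ M = x} = {x. poly P x = 0}"
    by (simp add: P_def poly_monom)
  ultimately show ?thesis using card_poly_roots_bound[of P] by simp
qed

lemma coeff_eq_0_if_vanishing_on:
  fixes c :: "nat \<Rightarrow> 'a::idom"
  assumes L: "L \<le> card A" and vanish: "\<And>\<beta>. \<beta> \<in> A \<Longrightarrow> (\<Sum>i<L. c i * \<beta> ^ i) = 0"
    and i: "i < L"
  shows "c i = 0"
proof -
  define P where "P = (\<Sum>i<L. monom (c i) i)"
  have coeff_P: "coeff P j = (if j < L then c j else 0)" for j
    by (simp add: P_def coeff_sum)
  have "P = 0"
  proof (rule ccontr)
    assume P: "P \<noteq> 0"
    have "A \<subseteq> {x. poly P x = 0}"
      using vanish by (auto simp: P_def poly_sum poly_monom)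
    then have "card A \<le> card {x. poly P x = 0}"
      using poly_roots_finite[OF P] by (intro card_mono) auto
    also have "\<dots> \<le> degree P" by (rule card_poly_roots_bound[OF P])
    also have "\<dots> < L"
      using i by (intro degree_lessI P) (auto simp: coeff_P)
    finally show False using L by simp
  qed
  then show ?thesis using coeff_P[of i] i by simp
qed

lemma power_power_Suc: "x ^ b ^ Suc j = (x ^ b ^ j) ^ b" for x :: "'a::monoid_mult"
  by (simp add: power_mult[symmetric] mult.commute)

locale finite_subfield =
  fixes K :: "'a::field set"
  assumes subfield: "is_subfield K" and finite_K: "finite K"
begin

lemma zero_mem: "0 \<in> K" and one_mem: "1 \<in> K"
  and add_mem: "x \<in> K \<Longrightarrow> y \<in> K \<Longrightarrow> x + y \<in> K"
  and mult_mem: "x \<in> K \<Longrightarrow> y \<in> K \<Longrightarrow> x * y \<in> K"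
  and uminus_mem: "x \<in> K \<Longrightarrow> - x \<in> K"
  and inverse_mem: "x \<in> K \<Longrightarrow> inverse x \<in> K"
  using subfield unfolding is_subfield_def by auto

lemma diff_mem: "x \<in> K \<Longrightarrow> y \<in> K \<Longrightarrow> x - y \<in> K"
  using add_mem uminus_mem by (metis diff_conv_add_uminus)

lemma card_ge_2: "2 \<le> card K"
proof -
  have "card {0::'a, 1} \<le> card K"
    using zero_mem one_mem finite_K by (intro card_mono) auto
  then show ?thesis by simp
qed

lemma power_card_eq_self: "k \<in> K \<Longrightarrow> k ^ card K = k"
  using mult_closed_power_card_eq_self[OF finite_K zero_mem mult_mem] by blast

lemma of_nat_card_eq_0: "of_nat (card K) = (0::'a)"
proof -
  have inj: "inj_on (\<lambda>k. k + 1) K" by (auto simp: inj_on_def)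
  have "(\<lambda>k. k + 1) ` K = K"
    using add_mem one_mem by (intro card_subset_eq[OF finite_K _ card_image[OF inj]]) auto
  then have "sum id K = sum id ((\<lambda>k. k + 1) ` K)" by simp
  also have "\<dots> = sum id K + of_nat (card K)"
    by (simp add: sum.reindex[OF inj] sum.distrib)
  finally show ?thesis by simp
qed

end


section \<open>Words, spans and the dimension of a code\<close>

definition word_eval :: "nat \<Rightarrow> (nat \<Rightarrow> 'a::field) \<Rightarrow> 'a \<Rightarrow> 'a" where
  "word_eval L c \<beta> = (\<Sum>i<L. c i * \<beta> ^ i)"

lemma cyclic_code_eq: "cyclic_code K L Z = {c \<in> words K L. \<forall>\<beta>\<in>Z. word_eval L c \<beta> = 0}"
  by (simp add: cyclic_code_def word_eval_def)

lemma cyclic_code_subset_words: "cyclic_code K L Z \<subseteq> words K L"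
  by (auto simp: cyclic_code_def)

lemma word_eval_add: "word_eval L (\<lambda>i. a i + b i) \<beta> = word_eval L a \<beta> + word_eval L b \<beta>"
  by (simp add: word_eval_def sum.distrib distrib_right)

lemma word_eval_diff: "word_eval L (\<lambda>i. a i - b i) \<beta> = word_eval L a \<beta> - word_eval L b \<beta>"
  by (simp add: word_eval_def sum_subtractf left_diff_distrib)

lemma word_eval_smult: "word_eval L (\<lambda>i. k * a i) \<beta> = k * word_eval L a \<beta>"
  by (simp add: word_eval_def sum_distrib_left mult.assoc)

lemma card_words:
  assumes "finite K"
  shows "card (words K L) = card K ^ L" and "finite (words K L)"
proof -
  define pad where "pad f = (\<lambda>i. if i < L then f i else 0)" for f :: "nat \<Rightarrow> 'a"
  have words_eq: "words K L = pad ` ({..<L} \<rightarrow>\<^sub>E K)"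
  proof (intro equalityI subsetI)
    fix c assume c: "c \<in> words K L"
    then have "c = pad (restrict c {..<L})" by (auto simp: pad_def words_def)
    moreover have "restrict c {..<L} \<in> {..<L} \<rightarrow>\<^sub>E K" using c by (auto simp: words_def)
    ultimately show "c \<in> pad ` ({..<L} \<rightarrow>\<^sub>E K)" by blast
  next
    fix c assume "c \<in> pad ` ({..<L} \<rightarrow>\<^sub>E K)"
    then obtain f where f: "f \<in> {..<L} \<rightarrow>\<^sub>E K" and c: "c = pad f" by blast
    show "c \<in> words K L" using PiE_mem[OF f] by (simp add: c words_def pad_def)
  qed
  have "inj_on pad ({..<L} \<rightarrow>\<^sub>E K)"
  proof (rule inj_onI, rule ext)
    fix f g i
    assume f: "f \<in> {..<L} \<rightarrow>\<^sub>E K" and g: "g \<in> {..<L} \<rightarrow>\<^sub>E K" and eq: "pad f = pad g"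
    show "f i = g i"
    proof (cases "i < L")
      case True
      then show ?thesis using fun_cong[OF eq, of i] by (simp add: pad_def)
    next
      case False
      then show ?thesis using PiE_arb[OF f, of i] PiE_arb[OF g, of i] by simp
    qed
  qed
  then show "card (words K L) = card K ^ L"
    by (simp add: words_eq card_image card_PiE)
  show "finite (words K L)"
    unfolding words_eq using assms by (intro finite_imageI finite_PiE) auto
qed

lemma card_extend_code:
  assumes "C \<subseteq> words K L"
  shows "card (extend_code L C) = card C"
  unfolding extend_code_def
proof (rule card_image, rule inj_onI, rule ext)
  fix c c' i
  assume c: "c \<in> C" and c': "c' \<in> C"
    and eq: "c(L := - (\<Sum>i<L. c i)) = c'(L := - (\<Sum>i<L. c' i))"
  show "c i = c' i"
  proof (cases "i = L")
    case True
    have "c \<in> words K L" "c' \<in> words K L" using c c' assms by auto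
    then show ?thesis using True by (simp add: words_def)
  next
    case False
    then show ?thesis using fun_cong[OF eq, of i] by simp
  qed
qed

lemma extend_code_add:
  assumes "\<And>a b. a \<in> C \<Longrightarrow> b \<in> C \<Longrightarrow> (\<lambda>i. a i + b i) \<in> C"
    and "a \<in> extend_code L C" "b \<in> extend_code L C"
  shows "(\<lambda>i. a i + b i) \<in> extend_code L C"
proof -
  obtain c c' where "c \<in> C" "c' \<in> C" "a = c(L := - (\<Sum>i<L. c i))" "b = c'(L := - (\<Sum>i<L. c' i))"
    using assms(2,3) unfolding extend_code_def by blast
  then show ?thesis
    using assms(1) unfolding extend_code_def
    by (intro image_eqI[where x = "\<lambda>i. c i + c' i"]) (auto simp: fun_eq_iff sum.distrib)
qed

lemma extend_code_smult:
  assumes "\<And>a. a \<in> C \<Longrightarrow> (\<lambda>i. k * a i) \<in> C" and "a \<in> extend_code L C"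
  shows "(\<lambda>i. k * a i) \<in> extend_code L C"
proof -
  obtain c where "c \<in> C" "a = c(L := - (\<Sum>i<L. c i))"
    using assms(2) unfolding extend_code_def by blast
  then show ?thesis
    using assms(1) unfolding extend_code_def
    by (intro image_eqI[where x = "\<lambda>i. k * c i"]) (auto simp: fun_eq_iff sum_distrib_left)
qed

context finite_subfield
begin

lemma words_add: "a \<in> words K L \<Longrightarrow> b \<in> words K L \<Longrightarrow> (\<lambda>i. a i + b i) \<in> words K L"
  and words_diff: "a \<in> words K L \<Longrightarrow> b \<in> words K L \<Longrightarrow> (\<lambda>i. a i - b i) \<in> words K L"
  and words_smult: "k \<in> K \<Longrightarrow> a \<in> words K L \<Longrightarrow> (\<lambda>i. k * a i) \<in> words K L"
  by (auto simp: words_def add_mem diff_mem mult_mem)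

lemma cyclic_code_add:
  "a \<in> cyclic_code K L Z \<Longrightarrow> b \<in> cyclic_code K L Z \<Longrightarrow> (\<lambda>i. a i + b i) \<in> cyclic_code K L Z"
  and cyclic_code_smult:
  "k \<in> K \<Longrightarrow> a \<in> cyclic_code K L Z \<Longrightarrow> (\<lambda>i. k * a i) \<in> cyclic_code K L Z"
  by (auto simp: cyclic_code_eq words_add words_smult word_eval_add word_eval_smult)

lemma kspan_eq_image: "kspan K d v = (\<lambda>a x. \<Sum>i<d. a i * v i x) ` ({..<d} \<rightarrow>\<^sub>E K)"
proof (intro equalityI subsetI)
  fix s assume "s \<in> kspan K d v"
  then obtain a where a: "\<forall>i<d. a i \<in> K" and s: "s = (\<lambda>x. \<Sum>i<d. a i * v i x)"
    unfolding kspan_def by blast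
  have "s = (\<lambda>x. \<Sum>i<d. restrict a {..<d} i * v i x)" unfolding s by simp
  moreover have "restrict a {..<d} \<in> {..<d} \<rightarrow>\<^sub>E K" using a by auto
  ultimately show "s \<in> (\<lambda>a x. \<Sum>i<d. a i * v i x) ` ({..<d} \<rightarrow>\<^sub>E K)" by blast
qed (auto simp: kspan_def)

lemma card_kspan_le: "card (kspan K d v) \<le> card K ^ d"
proof -
  have "card (kspan K d v) \<le> card ({..<d} \<rightarrow>\<^sub>E K)"
    unfolding kspan_eq_image by (rule card_image_le) (simp add: finite_PiE finite_K)
  then show ?thesis by (simp add: card_PiE)
qed

lemma kspan_Suc:
  "kspan K (Suc d) (v(d := w)) = (\<lambda>(s, a) x. s x + a * w x) ` (kspan K d v \<times> K)"
proof (intro equalityI subsetI)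
  fix t assume "t \<in> kspan K (Suc d) (v(d := w))"
  then obtain a where a: "\<forall>i<Suc d. a i \<in> K"
    and t: "t = (\<lambda>x. \<Sum>i<Suc d. a i * (v(d := w)) i x)"
    unfolding kspan_def by blast
  have "t = (\<lambda>x. (\<Sum>i<d. a i * v i x) + a d * w x)" unfolding t by (simp add: fun_eq_iff)
  moreover have "(\<lambda>x. \<Sum>i<d. a i * v i x) \<in> kspan K d v" using a unfolding kspan_def by auto
  ultimately show "t \<in> (\<lambda>(s, a) x. s x + a * w x) ` (kspan K d v \<times> K)"
    using a by (auto intro!: image_eqI[where x = "(\<lambda>x. \<Sum>i<d. a i * v i x, a d)"])
next
  fix t assume "t \<in> (\<lambda>(s, a) x. s x + a * w x) ` (kspan K d v \<times> K)"
  then obtain s c where s: "s \<in> kspan K d v" and c: "c \<in> K" and t: "t = (\<lambda>x. s x + c * w x)"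
    by auto
  obtain b where b: "\<forall>i<d. b i \<in> K" and s_eq: "s = (\<lambda>x. \<Sum>i<d. b i * v i x)"
    using s unfolding kspan_def by blast
  have "t = (\<lambda>x. \<Sum>i<Suc d. (b(d := c)) i * (v(d := w)) i x)"
    unfolding t s_eq by (simp add: fun_eq_iff)
  moreover have "\<forall>i<Suc d. (b(d := c)) i \<in> K" using b c by (auto simp: less_Suc_eq)
  ultimately show "t \<in> kspan K (Suc d) (v(d := w))" unfolding kspan_def by blast
qed

lemma inj_on_kspan_Suc:
  assumes w: "w \<notin> kspan K d v"
  shows "inj_on (\<lambda>(s, a) x. s x + a * w x) (kspan K d v \<times> K)"
proof (rule inj_onI, clarify)
  fix s a s' a'
  assume s: "s \<in> kspan K d v" and a: "a \<in> K" and s': "s' \<in> kspan K d v" and a': "a' \<in> K"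
    and eq: "(\<lambda>x. s x + a * w x) = (\<lambda>x. s' x + a' * w x)"
  have "a = a'"
  proof (rule ccontr)
    assume ne: "a \<noteq> a'"
    obtain b where b: "\<forall>i<d. b i \<in> K" and s_eq: "s = (\<lambda>x. \<Sum>i<d. b i * v i x)"
      using s unfolding kspan_def by blast
    obtain b' where b': "\<forall>i<d. b' i \<in> K" and s'_eq: "s' = (\<lambda>x. \<Sum>i<d. b' i * v i x)"
      using s' unfolding kspan_def by blast
    define g where "g = inverse (a - a')"
    have "w x = (\<Sum>i<d. ((b' i - b i) * g) * v i x)" for x
    proof -
      have "(a - a') * w x = s' x - s x"
        using fun_cong[OF eq, of x] by (simp add: algebra_simps)
      then have "w x = (s' x - s x) * g"
        using ne by (simp add: g_def field_simps)
      then show ?thesis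
        by (simp add: s_eq s'_eq sum_distrib_left sum_subtractf[symmetric] algebra_simps)
    qed
    moreover have "\<forall>i<d. (b' i - b i) * g \<in> K"
      using b b' a a' by (simp add: g_def diff_mem mult_mem inverse_mem)
    ultimately have "w \<in> kspan K d v" unfolding kspan_def by (auto simp: fun_eq_iff)
    then show False using w by simp
  qed
  then show "s = s' \<and> a = a'" using eq by (simp add: fun_eq_iff)
qed

lemma kspan_subset:
  assumes add: "\<And>a b. a \<in> C \<Longrightarrow> b \<in> C \<Longrightarrow> (\<lambda>x. a x + b x) \<in> C"
    and smult: "\<And>k a. k \<in> K \<Longrightarrow> a \<in> C \<Longrightarrow> (\<lambda>x. k * a x) \<in> C"
    and zero: "(\<lambda>x. 0) \<in> C" and v: "\<forall>i<j. v i \<in> C"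
  shows "kspan K j v \<subseteq> C"
  using v
proof (induction j)
  case 0
  then show ?case using zero by (auto simp: kspan_def)
next
  case (Suc j)
  have "kspan K (Suc j) v = (\<lambda>(s, a) x. s x + a * v j x) ` (kspan K j v \<times> K)"
    using kspan_Suc[of j v "v j"] by simp
  moreover have "kspan K j v \<subseteq> C" using Suc by simp
  ultimately show ?case using Suc.prems add smult by auto
qed

text \<open>Greedily adjoin a vector outside the current span; each step multiplies its size by \<open>|K|\<close>.\<close>
lemma exists_kspan_card:
  assumes add: "\<And>a b. a \<in> C \<Longrightarrow> b \<in> C \<Longrightarrow> (\<lambda>x. a x + b x) \<in> C"
    and smult: "\<And>k a. k \<in> K \<Longrightarrow> a \<in> C \<Longrightarrow> (\<lambda>x. k * a x) \<in> C"
    and zero: "(\<lambda>x. 0) \<in> C" and card_C: "card C = card K ^ d"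
  shows "j \<le> d \<Longrightarrow> \<exists>v. (\<forall>i<j. v i \<in> C) \<and> card (kspan K j v) = card K ^ j"
proof (induction j)
  case 0
  have "kspan K 0 v = {\<lambda>x. 0}" for v by (auto simp: kspan_def)
  then show ?case by simp
next
  case (Suc j)
  then obtain v where v: "\<forall>i<j. v i \<in> C" and card_v: "card (kspan K j v) = card K ^ j"
    by (meson Suc_leD)
  have "card K ^ j < card K ^ d" using Suc.prems card_ge_2 by (intro power_strict_increasing) simp_all
  moreover have sub: "kspan K j v \<subseteq> C" by (rule kspan_subset[OF add smult zero v])
  ultimately have "kspan K j v \<noteq> C" using card_v card_C by auto
  then obtain w where w: "w \<in> C" "w \<notin> kspan K j v" using sub by blast
  have "card (kspan K (Suc j) (v(j := w))) = card (kspan K j v \<times> K)"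
    unfolding kspan_Suc by (rule card_image[OF inj_on_kspan_Suc[OF w(2)]])
  also have "\<dots> = card K ^ Suc j" using card_v by (simp add: card_cartesian_product)
  finally have "card (kspan K (Suc j) (v(j := w))) = card K ^ Suc j" .
  moreover have "\<forall>i<Suc j. (v(j := w)) i \<in> C" using v w by (auto simp: less_Suc_eq)
  ultimately show ?case by blast
qed

lemma code_dim_eq_if_card:
  assumes add: "\<And>a b. a \<in> C \<Longrightarrow> b \<in> C \<Longrightarrow> (\<lambda>x. a x + b x) \<in> C"
    and smult: "\<And>k a. k \<in> K \<Longrightarrow> a \<in> C \<Longrightarrow> (\<lambda>x. k * a x) \<in> C"
    and card_C: "card C = card K ^ d"
  shows "code_dim K C = d"
proof -
  have q: "2 \<le> card K" by (rule card_ge_2)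
  have fin: "finite C" using card_C q by (intro card_ge_0_finite) simp
  have "C \<noteq> {}" using card_C q by auto
  then obtain c0 where "c0 \<in> C" by blast
  then have zero: "(\<lambda>x. 0) \<in> C" using smult[OF zero_mem] by simp
  obtain v where v: "\<forall>i<d. v i \<in> C" and card_v: "card (kspan K d v) = card K ^ d"
    using exists_kspan_card[OF add smult zero card_C order.refl] by blast
  have spanning: "kspan K d v = C"
    by (rule card_subset_eq[OF fin kspan_subset[OF add smult zero v] trans[OF card_v card_C[symmetric]]])
  have minimal: "d \<le> d'" if "C = kspan K d' v'" for d' v'
    using card_kspan_le[of d' v'] that card_C q by (simp add: power_le_imp_le_exp)
  show ?thesis
    unfolding code_dim_def using spanning[symmetric] minimal by (intro Least_equality) auto
qed

end


section \<open>Cyclic codes with Frobenius-closed zero sets\<close>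

locale subfield_extension = finite_subfield K for K :: "'a::{field,finite} set" +
  fixes q n :: nat
  assumes card_K: "card K = q" and card_UNIV: "card (UNIV :: 'a set) = q ^ n" and n_pos: "0 < n"
    and prime_power: "\<exists>p l. prime p \<and> q = p ^ l"
begin

abbreviation N :: nat where "N \<equiv> q ^ n - 1"

lemma q_ge_2: "2 \<le> q"
  using card_ge_2 card_K by simp

lemma N_pos: "0 < N"
proof -
  have "q ^ 1 \<le> q ^ n" using q_ge_2 n_pos by (intro power_increasing) auto
  then show ?thesis using q_ge_2 by simp
qed

lemma card_nonzero: "card (UNIV - {0::'a}) = N"
  using card_UNIV by (simp add: card_Diff_singleton)

lemma power_q_eq_self_if_mem: "k \<in> K \<Longrightarrow> k ^ q = k"
  using power_card_eq_self card_K by simp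

lemma power_q_power_n: "(x::'a) ^ q ^ n = x"
  using mult_closed_power_card_eq_self[of UNIV x] card_UNIV by simp

lemma frobenius_inverse: "((x::'a) ^ q) ^ q ^ (n - 1) = x"
  using power_q_power_n[of x] power_minus_mult[OF n_pos, of q]
  by (simp add: power_mult[symmetric] mult.commute)

lemma power_q_power_eq_iff: "(x::'a) ^ q ^ j = y ^ q ^ j \<longleftrightarrow> x = y"
proof (induction j)
  case (Suc j)
  show ?case
    unfolding power_power_Suc Suc[symmetric] by (metis frobenius_inverse)
qed simp

lemma CHAR_prime: "prime CHAR('a)" and q_CHAR_power: "\<exists>l. q = CHAR('a) ^ l"
proof -
  obtain p l where p: "prime p" and q: "q = p ^ l" using prime_power by blast
  have "(of_nat p :: 'a) ^ l = 0" using of_nat_card_eq_0 card_K q by simp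
  then have "CHAR('a) dvd p" by (simp add: of_nat_eq_0_iff_char_dvd)
  then have "CHAR('a) = p" using p by (metis CHAR_not_1 One_nat_def prime_nat_iff)
  then show "prime CHAR('a)" "\<exists>l. q = CHAR('a) ^ l" using p q by auto
qed

lemma power_q_sum: "sum f A ^ q = (\<Sum>i\<in>A. f i ^ q)" for f :: "'b \<Rightarrow> 'a"
  using q_CHAR_power freshmans_dream_sum'[OF CHAR_prime] by blast

lemma word_eval_power_q:
  assumes "c \<in> words K L"
  shows "word_eval L c \<beta> ^ q = word_eval L c (\<beta> ^ q)"
proof -
  have "(c i * \<beta> ^ i) ^ q = c i * (\<beta> ^ q) ^ i" if "i < L" for i
    using assms that power_q_eq_self_if_mem[of "c i"]
    by (simp add: words_def power_mult_distrib power_mult[symmetric] mult.commute)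
  then show ?thesis by (simp add: word_eval_def power_q_sum)
qed

definition frobenius_closed :: "'a set \<Rightarrow> bool" where
  "frobenius_closed Z \<longleftrightarrow> (\<forall>\<beta>\<in>Z. \<beta> ^ q \<in> Z)"

definition frobenius_maps :: "'a set \<Rightarrow> ('a \<Rightarrow> 'a) set" where
  "frobenius_maps Z = {h \<in> Z \<rightarrow>\<^sub>E UNIV. \<forall>\<beta>\<in>Z. h (\<beta> ^ q) = h \<beta> ^ q}"

definition frobenius_orbit :: "'a \<Rightarrow> 'a set" where
  "frobenius_orbit \<beta> = range (\<lambda>j. \<beta> ^ q ^ j)"

lemma frobenius_closed_power:
  "frobenius_closed Z \<Longrightarrow> \<gamma> \<in> Z \<Longrightarrow> \<gamma> ^ q ^ j \<in> Z"
  by (induction j) (auto simp only: power_power_Suc frobenius_closed_def power_0 power_one_right)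

lemma frobenius_maps_power:
  assumes "h \<in> frobenius_maps Z" "frobenius_closed Z" "\<gamma> \<in> Z"
  shows "h (\<gamma> ^ q ^ j) = h \<gamma> ^ q ^ j"
proof (induction j)
  case (Suc j)
  have "\<gamma> ^ q ^ j \<in> Z" using frobenius_closed_power assms(2,3) by blast
  then show ?case
    using assms(1) Suc unfolding power_power_Suc by (simp add: frobenius_maps_def)
qed simp

lemma finite_frobenius_maps: "finite (frobenius_maps Z)"
  unfolding frobenius_maps_def by (rule finite_subset[OF _ finite_PiE[of Z "\<lambda>_. UNIV"]]) auto

lemma frobenius_orbit_subset:
  "frobenius_closed Z \<Longrightarrow> \<beta> \<in> Z \<Longrightarrow> frobenius_orbit \<beta> \<subseteq> Z"
  using frobenius_closed_power by (auto simp: frobenius_orbit_def)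

lemma self_in_frobenius_orbit: "\<beta> \<in> frobenius_orbit \<beta>"
  unfolding frobenius_orbit_def by (metis power_0 power_one_right rangeI)

lemma frobenius_closed_Diff_orbit:
  assumes "frobenius_closed Z"
  shows "frobenius_closed (Z - frobenius_orbit \<beta>)"
  unfolding frobenius_closed_def
proof
  fix \<gamma> assume \<gamma>: "\<gamma> \<in> Z - frobenius_orbit \<beta>"
  have "\<gamma> ^ q \<notin> frobenius_orbit \<beta>"
  proof
    assume "\<gamma> ^ q \<in> frobenius_orbit \<beta>"
    then obtain j where "\<gamma> ^ q = \<beta> ^ q ^ j" by (auto simp: frobenius_orbit_def)
    then have "\<gamma> = \<beta> ^ q ^ (j + (n - 1))"
      using frobenius_inverse[of \<gamma>] by (simp add: power_add power_mult)
    then show False using \<gamma> by (auto simp: frobenius_orbit_def)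
  qed
  then show "\<gamma> ^ q \<in> Z - frobenius_orbit \<beta>"
    using \<gamma> assms by (auto simp: frobenius_closed_def)
qed

text \<open>Pigeonhole on the first \<open>|orbit| + 1\<close> iterates, then cancel the injective Frobenius.\<close>
lemma frobenius_period: "\<exists>s. 0 < s \<and> s \<le> card (frobenius_orbit \<beta>) \<and> \<beta> ^ q ^ s = \<beta>"
proof -
  define c where "c = card (frobenius_orbit \<beta>)"
  let ?f = "\<lambda>j. \<beta> ^ q ^ j"
  have "?f ` {..c} \<subseteq> frobenius_orbit \<beta>" by (auto simp: frobenius_orbit_def)
  then have "card (?f ` {..c}) < card {..c}"
    using card_mono[of "frobenius_orbit \<beta>" "?f ` {..c}"] by (simp add: c_def)
  then have "\<not> inj_on ?f {..c}" by (rule pigeonhole)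
  then obtain j k where jk: "j < k" "k \<le> c" "?f j = ?f k"
    unfolding inj_on_def by (metis atMost_iff linorder_neqE_nat)
  have "?f k = (\<beta> ^ q ^ (k - j)) ^ q ^ j"
    using jk(1) by (simp add: power_mult[symmetric] power_add[symmetric])
  then have "\<beta> ^ q ^ (k - j) = \<beta>" using jk(3) power_q_power_eq_iff by metis
  then show ?thesis using jk(1,2) by (intro exI[of _ "k - j"]) (auto simp: c_def)
qed

lemma frobenius_maps_eqI:
  assumes h: "h \<in> frobenius_maps Z" and h': "h' \<in> frobenius_maps Z"
    and closed: "frobenius_closed Z" and \<beta>: "\<beta> \<in> Z" and at_\<beta>: "h \<beta> = h' \<beta>"
    and off_orbit: "\<And>x. x \<in> Z - frobenius_orbit \<beta> \<Longrightarrow> h x = h' x"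
  shows "h = h'"
proof
  fix x
  show "h x = h' x"
  proof (cases "x \<in> frobenius_orbit \<beta>")
    case True
    then obtain j where "x = \<beta> ^ q ^ j" by (auto simp: frobenius_orbit_def)
    then show ?thesis
      using at_\<beta> frobenius_maps_power[OF h closed \<beta>] frobenius_maps_power[OF h' closed \<beta>] by simp
  next
    case not_orbit: False
    show ?thesis
    proof (cases "x \<in> Z")
      case True
      then show ?thesis using not_orbit off_orbit by blast
    next
      case False
      have hZ: "h \<in> Z \<rightarrow>\<^sub>E UNIV" and h'Z: "h' \<in> Z \<rightarrow>\<^sub>E UNIV"
        using h h' by (simp_all add: frobenius_maps_def)
      show ?thesis using PiE_arb[OF hZ False] PiE_arb[OF h'Z False] by simp
    qed
  qed
qed

text \<open>A Frobenius-compatible map on \<open>Z\<close> is determined by its value at \<open>\<beta>\<close> on the orbit of \<open>\<beta>\<close>,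
  and that value is one of at most \<open>q\<^sup>s\<close> roots of \<open>x\<^bsup>q\<^sup>s\<^esup> = x\<close>.\<close>
lemma card_frobenius_maps_le_orbit:
  assumes closed: "frobenius_closed Z" and \<beta>: "\<beta> \<in> Z"
  shows "card (frobenius_maps Z)
    \<le> q ^ card (frobenius_orbit \<beta>) * card (frobenius_maps (Z - frobenius_orbit \<beta>))"
proof -
  let ?O = "frobenius_orbit \<beta>"
  obtain s where s: "0 < s" "s \<le> card ?O" "\<beta> ^ q ^ s = \<beta>" using frobenius_period by blast
  define \<phi> where "\<phi> h = (h \<beta>, restrict h (Z - ?O))" for h :: "'a \<Rightarrow> 'a"
  have "inj_on \<phi> (frobenius_maps Z)"
  proof (rule inj_onI)
    fix h h' assume h: "h \<in> frobenius_maps Z" and h': "h' \<in> frobenius_maps Z" and eq: "\<phi> h = \<phi> h'"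
    then have at_\<beta>: "h \<beta> = h' \<beta>" and off_orbit: "restrict h (Z - ?O) = restrict h' (Z - ?O)"
      unfolding \<phi>_def prod.inject by blast+
    show "h = h'"
    proof (rule frobenius_maps_eqI[OF h h' closed \<beta> at_\<beta>])
      fix x assume x: "x \<in> Z - ?O"
      show "h x = h' x" using fun_cong[OF off_orbit, of x] unfolding restrict_apply'[OF x] .
    qed
  qed
  moreover have "\<phi> ` frobenius_maps Z \<subseteq> {x. x ^ q ^ s = x} \<times> frobenius_maps (Z - ?O)"
  proof (rule image_subsetI)
    fix h assume h: "h \<in> frobenius_maps Z"
    have "h \<beta> ^ q ^ s = h \<beta>"
      using frobenius_maps_power[OF h closed \<beta>, of s, unfolded s(3), symmetric] .
    moreover have "restrict h (Z - ?O) \<in> frobenius_maps (Z - ?O)"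
      using h frobenius_closed_Diff_orbit[OF closed]
      by (auto simp: frobenius_maps_def frobenius_closed_def)
    ultimately show "\<phi> h \<in> {x. x ^ q ^ s = x} \<times> frobenius_maps (Z - ?O)" by (simp add: \<phi>_def)
  qed
  ultimately have "card (frobenius_maps Z) \<le> card ({x::'a. x ^ q ^ s = x} \<times> frobenius_maps (Z - ?O))"
    by (intro card_inj_on_le) (simp_all add: finite_frobenius_maps)
  also have "\<dots> = card {x::'a. x ^ q ^ s = x} * card (frobenius_maps (Z - ?O))"
    by (rule card_cartesian_product)
  also have "\<dots> \<le> q ^ s * card (frobenius_maps (Z - ?O))"
  proof (rule mult_right_mono)
    have "q ^ 1 \<le> q ^ s" using q_ge_2 s(1) by (intro power_increasing) auto
    then show "card {x::'a. x ^ q ^ s = x} \<le> q ^ s"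
      using q_ge_2 by (intro card_power_fixed_points_le) auto
  qed simp
  also have "\<dots> \<le> q ^ card ?O * card (frobenius_maps (Z - ?O))"
    using s(2) q_ge_2 by (intro mult_right_mono power_increasing) auto
  finally show ?thesis .
qed

lemma card_frobenius_maps_le: "frobenius_closed Z \<Longrightarrow> card (frobenius_maps Z) \<le> q ^ card Z"
proof (induction "card Z" arbitrary: Z rule: less_induct)
  case less
  show ?case
  proof (cases "Z = {}")
    case True
    then show ?thesis by (simp add: frobenius_maps_def)
  next
    case False
    then obtain \<beta> where \<beta>: "\<beta> \<in> Z" by blast
    let ?O = "frobenius_orbit \<beta>"
    have sub: "?O \<subseteq> Z" using frobenius_orbit_subset[OF less.prems \<beta>] .
    have "card (Z - ?O) < card Z"
      using \<beta> self_in_frobenius_orbit by (intro psubset_card_mono) auto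
    then have "card (frobenius_maps (Z - ?O)) \<le> q ^ card (Z - ?O)"
      using less.hyps frobenius_closed_Diff_orbit[OF less.prems] by blast
    then have "card (frobenius_maps Z) \<le> q ^ card ?O * q ^ card (Z - ?O)"
      using card_frobenius_maps_le_orbit[OF less.prems \<beta>] by (meson le_trans mult_le_mono2)
    also have "\<dots> = q ^ card Z"
      using sub card_mono[OF _ sub] by (simp add: card_Diff_subset power_add[symmetric])
    finally show ?thesis .
  qed
qed

text \<open>Words with the same values on \<open>Z\<close> differ by a codeword, and these values form a
  Frobenius-compatible map on \<open>Z\<close>.\<close>
lemma card_words_le_card_cyclic_code_mult:
  assumes closed: "frobenius_closed Z"
  shows "q ^ N \<le> card (cyclic_code K N Z) * card (frobenius_maps Z)"
proof -
  define \<rho> where "\<rho> c = restrict (word_eval N c) Z" for c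
  define rep where "rep y = (SOME c. c \<in> words K N \<and> \<rho> c = y)" for y
  define \<psi> where "\<psi> c = ((\<lambda>i. c i - rep (\<rho> c) i), \<rho> c)" for c
  have rep: "rep (\<rho> c) \<in> words K N \<and> \<rho> (rep (\<rho> c)) = \<rho> c" if "c \<in> words K N" for c
    unfolding rep_def by (rule someI[of _ c]) (use that in auto)
  have "inj_on \<psi> (words K N)"
  proof (rule inj_onI, rule ext)
    fix c c' i assume eq: "\<psi> c = \<psi> c'"
    then have "\<rho> c = \<rho> c'" by (simp add: \<psi>_def)
    moreover have "c i - rep (\<rho> c) i = c' i - rep (\<rho> c') i"
      using fun_cong[OF arg_cong[OF eq, of fst], of i] by (simp add: \<psi>_def)
    ultimately show "c i = c' i" by simp
  qed
  moreover have "\<psi> ` words K N \<subseteq> cyclic_code K N Z \<times> frobenius_maps Z"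
  proof (rule image_subsetI)
    fix c assume c: "c \<in> words K N"
    have "word_eval N (rep (\<rho> c)) \<beta> = word_eval N c \<beta>" if "\<beta> \<in> Z" for \<beta>
      using fun_cong[OF conjunct2[OF rep[OF c]], of \<beta>] that by (simp add: \<rho>_def)
    then have "(\<lambda>i. c i - rep (\<rho> c) i) \<in> cyclic_code K N Z"
      using c rep[OF c] by (simp add: cyclic_code_eq words_diff word_eval_diff)
    moreover have "\<rho> c \<in> frobenius_maps Z"
      using closed c word_eval_power_q[OF c]
      by (auto simp: frobenius_maps_def \<rho>_def frobenius_closed_def)
    ultimately show "\<psi> c \<in> cyclic_code K N Z \<times> frobenius_maps Z" by (simp add: \<psi>_def)
  qed
  moreover have "finite (cyclic_code K N Z)"
    using finite_subset[OF cyclic_code_subset_words card_words(2)[OF finite_K]] .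
  ultimately have "card (words K N) \<le> card (cyclic_code K N Z \<times> frobenius_maps Z)"
    by (intro card_inj_on_le) (simp_all add: finite_frobenius_maps)
  then show ?thesis by (simp add: card_words finite_K card_K card_cartesian_product)
qed

lemma words_eqI_word_eval:
  assumes a: "a \<in> words K N" and b: "b \<in> words K N"
    and eval: "\<And>\<beta>. \<beta> \<noteq> 0 \<Longrightarrow> word_eval N a \<beta> = word_eval N b \<beta>"
  shows "a = b"
proof
  fix i
  show "a i = b i"
  proof (cases "i < N")
    case True
    have "a i - b i = 0"
    proof (rule coeff_eq_0_if_vanishing_on[where c = "\<lambda>i. a i - b i" and A = "UNIV - {0}"])
      show "N \<le> card (UNIV - {0::'a})" using card_nonzero by simp
      show "(\<Sum>i<N. (a i - b i) * \<beta> ^ i) = 0" if "\<beta> \<in> UNIV - {0}" for \<beta>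
        using eval[of \<beta>] that word_eval_diff[of N a b \<beta>] by (simp add: word_eval_def)
    qed (rule True)
    then show ?thesis by simp
  next
    case False
    then show ?thesis using a b by (simp add: words_def)
  qed
qed

text \<open>Codes for complementary zero sets in \<open>F\<^sup>*\<close> meet only in \<open>0\<close>, so adding their words is injective.\<close>
lemma card_cyclic_code_mult_complement_le:
  "card (cyclic_code K N Z) * card (cyclic_code K N (UNIV - {0} - Z)) \<le> q ^ N"
proof -
  let ?C = "cyclic_code K N Z" and ?C' = "cyclic_code K N (UNIV - {0} - Z)"
  define \<psi> where "\<psi> ab = (\<lambda>i. fst ab i + snd ab i)" for ab :: "(nat \<Rightarrow> 'a) \<times> (nat \<Rightarrow> 'a)"
  have "inj_on \<psi> (?C \<times> ?C')"
  proof (rule inj_onI, clarify)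
    fix a b a' b' assume a: "a \<in> ?C" "a' \<in> ?C" and b: "b \<in> ?C'" "b' \<in> ?C'"
      and eq: "\<psi> (a, b) = \<psi> (a', b')"
    have sum_eq: "a i + b i = a' i + b' i" for i using fun_cong[OF eq, of i] by (simp add: \<psi>_def)
    have "a = a'"
    proof (rule words_eqI_word_eval)
      show "a \<in> words K N" "a' \<in> words K N" using a cyclic_code_subset_words by blast+
      fix \<beta> :: 'a assume "\<beta> \<noteq> 0"
      show "word_eval N a \<beta> = word_eval N a' \<beta>"
      proof (cases "\<beta> \<in> Z")
        case True
        then show ?thesis using a by (simp add: cyclic_code_eq)
      next
        case False
        then have "word_eval N b \<beta> = 0" "word_eval N b' \<beta> = 0"
          using b \<open>\<beta> \<noteq> 0\<close> by (simp_all add: cyclic_code_eq)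
        moreover have "word_eval N a \<beta> + word_eval N b \<beta> = word_eval N a' \<beta> + word_eval N b' \<beta>"
          using sum_eq by (simp add: word_eval_add[symmetric])
        ultimately show ?thesis by simp
      qed
    qed
    moreover from this have "b = b'" using sum_eq by (simp add: fun_eq_iff)
    ultimately show "a = a' \<and> b = b'" ..
  qed
  moreover have "\<psi> ` (?C \<times> ?C') \<subseteq> words K N"
  proof (rule image_subsetI, clarify)
    fix a b assume "a \<in> ?C" "b \<in> ?C'"
    then have "a \<in> words K N" "b \<in> words K N" using cyclic_code_subset_words by blast+
    then show "\<psi> (a, b) \<in> words K N" by (simp add: \<psi>_def words_add)
  qed
  ultimately have "card (?C \<times> ?C') \<le> card (words K N)"
    by (intro card_inj_on_le) (simp_all add: card_words(2)[OF finite_K])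
  then show ?thesis by (simp add: card_cartesian_product card_words finite_K card_K)
qed

lemma card_cyclic_code:
  assumes closed: "frobenius_closed Z" and nonzero: "0 \<notin> Z"
  shows "card (cyclic_code K N Z) = q ^ (N - card Z)"
proof -
  define Z' where "Z' = UNIV - {0} - Z"
  have closed': "frobenius_closed Z'"
    unfolding frobenius_closed_def
  proof
    fix \<beta> assume \<beta>: "\<beta> \<in> Z'"
    have "\<beta> ^ q \<notin> Z"
      using frobenius_closed_power[OF closed, of "\<beta> ^ q" "n - 1"] frobenius_inverse[of \<beta>] \<beta>
      by (auto simp: Z'_def)
    then show "\<beta> ^ q \<in> Z'" using \<beta> by (simp add: Z'_def)
  qed
  have "Z \<subseteq> UNIV - {0}" using nonzero by auto
  then have N_eq: "N = card Z + card Z'"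
    using card_nonzero card_mono[of "UNIV - {0}" Z] by (simp add: Z'_def card_Diff_subset)
  have lower: "q ^ N \<le> card (cyclic_code K N Y) * q ^ card Y" if "frobenius_closed Y" for Y
    using card_words_le_card_cyclic_code_mult[OF that] card_frobenius_maps_le[OF that]
    by (meson le_trans mult_le_mono2)
  have upper: "card (cyclic_code K N Z) * card (cyclic_code K N Z') \<le> q ^ card Z' * q ^ card Z"
    using card_cyclic_code_mult_complement_le N_eq by (simp add: Z'_def power_add mult.commute)
  have q_pos: "0 < q" using q_ge_2 by simp
  have "q ^ card Z \<le> card (cyclic_code K N Z')"
    using lower[OF closed'] q_pos unfolding N_eq power_add by simp
  then have "card (cyclic_code K N Z) * q ^ card Z \<le> q ^ card Z' * q ^ card Z"
    using upper by (meson le_trans mult_le_mono2)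
  then have "card (cyclic_code K N Z) \<le> q ^ card Z'" using q_pos by simp
  moreover have "q ^ card Z' \<le> card (cyclic_code K N Z)"
    using lower[OF closed] q_pos unfolding N_eq power_add by simp
  moreover have "N - card Z = card Z'" using N_eq by simp
  ultimately show ?thesis by simp
qed

lemma code_dim_extend_cyclic_code:
  assumes "frobenius_closed Z" and "0 \<notin> Z"
  shows "code_dim K (extend_code N (cyclic_code K N Z)) = N - card Z"
proof (rule code_dim_eq_if_card)
  show "(\<lambda>x. a x + b x) \<in> extend_code N (cyclic_code K N Z)"
    if "a \<in> extend_code N (cyclic_code K N Z)" "b \<in> extend_code N (cyclic_code K N Z)" for a b
    using extend_code_add[OF cyclic_code_add] that by blast
  show "(\<lambda>x. k * a x) \<in> extend_code N (cyclic_code K N Z)"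
    if "k \<in> K" "a \<in> extend_code N (cyclic_code K N Z)" for k a
    using extend_code_smult[OF cyclic_code_smult[OF that(1)] that(2)] .
  have "card (extend_code N (cyclic_code K N Z)) = card (cyclic_code K N Z)"
    by (rule card_extend_code[OF cyclic_code_subset_words])
  then show "card (extend_code N (cyclic_code K N Z)) = card K ^ (N - card Z)"
    by (simp only: card_cyclic_code[OF assms] card_K)
qed

end


section \<open>Counting integers by their base-\<open>q\<close> digit sums\<close>

lemma digit_0: "digit q u 0 = u mod q"
  by (simp add: digit_def)

lemma digit_Suc: "digit q u (Suc i) = digit q (u div q) i"
  by (simp add: digit_def div_mult2_eq)

lemma wt_q_Suc: "wt_q q (Suc n) u = u mod q + wt_q q n (u div q)"
  unfolding wt_q_def sum.lessThan_Suc_shift by (simp add: digit_0 digit_Suc)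

lemma O_q_eq_sum: "O_q q n u = (\<Sum>i<n. if odd i then digit q u i else 0)"
  unfolding O_q_def by (simp add: sum.inter_filter[symmetric] Collect_conj_eq lessThan_def Int_commute)

lemma E_q_eq_sum: "E_q q n u = (\<Sum>i<n. if even i then digit q u i else 0)"
  unfolding E_q_def by (simp add: sum.inter_filter[symmetric] Collect_conj_eq lessThan_def Int_commute)

lemma O_q_Suc: "O_q q (Suc n) u = E_q q n (u div q)"
  unfolding O_q_eq_sum E_q_eq_sum sum.lessThan_Suc_shift digit_Suc by simp

lemma E_q_Suc: "E_q q (Suc n) u = u mod q + O_q q n (u div q)"
  unfolding O_q_eq_sum E_q_eq_sum sum.lessThan_Suc_shift digit_Suc by (simp add: digit_0)

lemma wt_q_eq_O_q_plus_E_q: "wt_q q n u = O_q q n u + E_q q n u"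
  unfolding wt_q_def O_q_eq_sum E_q_eq_sum sum.distrib[symmetric] by (rule sum.cong) auto

lemma wt_q_zero: "wt_q q n 0 = 0"
  by (simp add: wt_q_def digit_def)

lemma wt_q_le: "0 < q \<Longrightarrow> wt_q q n u \<le> n * (q - 1)"
  using sum_mono[of "{..<n}" "digit q u" "\<lambda>_. q - 1"]
  by (simp add: wt_q_def digit_def less_Suc_eq_le[symmetric])

lemma wt_q_complement:
  assumes q: "0 < q" and u: "u < q ^ n"
  shows "wt_q q n (q ^ n - 1 - u) = n * (q - 1) - wt_q q n u"
  using u
proof (induction n arbitrary: u)
  case (Suc n)
  define v where "v = q ^ n - 1 - u div q"
  have u_div: "u div q < q ^ n"
    using Suc.prems q by (simp add: div_less_iff_less_mult mult.commute)
  have "q ^ Suc n - 1 - u = v * q + (q - 1 - u mod q)"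
  proof -
    have "u div q + v + 1 = q ^ n" using u_div by (simp add: v_def)
    then have "q ^ Suc n = (u div q + v + 1) * q" by (simp add: mult.commute)
    then have "q ^ Suc n = (u div q) * q + v * q + q" by (simp add: algebra_simps)
    then show ?thesis
      using mod_less_divisor[OF q, of u] div_mult_mod_eq[of u q] by linarith
  qed
  then have "wt_q q (Suc n) (q ^ Suc n - 1 - u) = (q - 1 - u mod q) + (n * (q - 1) - wt_q q n (u div q))"
    using q Suc.IH[OF u_div] by (simp add: wt_q_Suc v_def)
  also have "\<dots> = Suc n * (q - 1) - wt_q q (Suc n) u"
    using wt_q_le[OF q, of n "u div q"] mod_less_divisor[OF q, of u] by (simp add: wt_q_Suc)
  finally show ?case .
qed (simp add: wt_q_def)

lemma card_digit_split:
  fixes q :: nat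
  assumes q: "0 < q"
  shows "card {u. u < q ^ Suc n \<and> P (u mod q) (u div q)} = (\<Sum>d<q. card {v. v < q ^ n \<and> P d v})"
proof -
  define S where "S = (SIGMA d:{..<q}. {v. v < q ^ n \<and> P d v})"
  define join where "join x = snd x * q + fst x" for x :: "nat \<times> nat"
  have "{u. u < q ^ Suc n \<and> P (u mod q) (u div q)} = join ` S"
  proof (intro equalityI subsetI)
    fix u assume u: "u \<in> {u. u < q ^ Suc n \<and> P (u mod q) (u div q)}"
    then have "(u mod q, u div q) \<in> S"
      using q by (auto simp: S_def div_less_iff_less_mult mult.commute)
    then show "u \<in> join ` S" by (auto simp: join_def intro!: image_eqI[of _ _ "(u mod q, u div q)"])
  next
    fix u assume "u \<in> join ` S"
    then obtain d v where d: "d < q" and v: "v < q ^ n" "P d v" and u: "u = v * q + d"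
      by (auto simp: S_def join_def)
    have "u < (v + 1) * q" using d u by simp
    also have "\<dots> \<le> q ^ Suc n" using mult_le_mono1[of "v + 1" "q ^ n" q] v by (simp add: mult.commute)
    finally show "u \<in> {u. u < q ^ Suc n \<and> P (u mod q) (u div q)}" using u d v by simp
  qed
  moreover have "join x mod q = fst x \<and> join x div q = snd x" if "x \<in> S" for x
    using that by (auto simp: S_def join_def)
  then have "inj_on join S" by (metis inj_onI prod_eq_iff)
  ultimately show ?thesis
    by (simp add: card_image S_def)
qed

definition wt_count :: "nat \<Rightarrow> nat \<Rightarrow> nat \<Rightarrow> nat" where
  "wt_count q n s = card {u. u < q ^ n \<and> wt_q q n u = s}"

definition even_odd_count :: "nat \<Rightarrow> nat \<Rightarrow> nat \<Rightarrow> nat \<Rightarrow> nat" where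
  "even_odd_count q n A B = card {u. u < q ^ n \<and> E_q q n u = A \<and> O_q q n u = B}"

lemma wt_count_0: "wt_count q 0 s = (if s = 0 then 1 else 0)"
proof -
  have "{u. u < q ^ 0 \<and> wt_q q 0 u = s} = (if s = 0 then {0} else {})"
    by (auto simp: wt_q_def)
  then show ?thesis by (simp add: wt_count_def)
qed

lemma wt_count_Suc:
  assumes "0 < q"
  shows "wt_count q (Suc n) s = (\<Sum>d<q. if d \<le> s then wt_count q n (s - d) else 0)"
proof -
  have "wt_count q (Suc n) s = (\<Sum>d<q. card {v. v < q ^ n \<and> d + wt_q q n v = s})"
    unfolding wt_count_def wt_q_Suc
    using card_digit_split[OF assms, of n "\<lambda>d v. d + wt_q q n v = s"] by simp
  also have "\<dots> = (\<Sum>d<q. if d \<le> s then wt_count q n (s - d) else 0)"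
    by (rule sum.cong) (auto simp: wt_count_def intro: arg_cong[where f = card])
  finally show ?thesis .
qed

lemma even_odd_count_0: "even_odd_count q 0 A B = (if A = 0 \<and> B = 0 then 1 else 0)"
proof -
  have "{u. u < q ^ 0 \<and> E_q q 0 u = A \<and> O_q q 0 u = B} = (if A = 0 \<and> B = 0 then {0} else {})"
    by (auto simp: E_q_def O_q_def)
  then show ?thesis by (simp add: even_odd_count_def)
qed

lemma even_odd_count_Suc:
  assumes "0 < q"
  shows "even_odd_count q (Suc n) A B = (\<Sum>d<q. if d \<le> A then even_odd_count q n B (A - d) else 0)"
proof -
  have "even_odd_count q (Suc n) A B = (\<Sum>d<q. card {v. v < q ^ n \<and> d + O_q q n v = A \<and> E_q q n v = B})"
    unfolding even_odd_count_def E_q_Suc O_q_Suc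
    using card_digit_split[OF assms, of n "\<lambda>d v. d + O_q q n v = A \<and> E_q q n v = B"] by simp
  also have "\<dots> = (\<Sum>d<q. if d \<le> A then even_odd_count q n B (A - d) else 0)"
    by (rule sum.cong) (auto simp: even_odd_count_def intro: arg_cong[where f = card])
  finally show ?thesis .
qed

lemma even_odd_count_eq_wt_count_mult:
  assumes "0 < q"
  shows "even_odd_count q n A B = wt_count q ((n + 1) div 2) A * wt_count q (n div 2) B"
proof (induction n arbitrary: A B)
  case 0
  then show ?case by (simp add: even_odd_count_0 wt_count_0)
next
  case (Suc n)
  have "even_odd_count q (Suc n) A B
      = wt_count q ((n + 1) div 2) B * (\<Sum>d<q. if d \<le> A then wt_count q (n div 2) (A - d) else 0)"
    unfolding even_odd_count_Suc[OF assms] Suc.IH sum_distrib_left by (rule sum.cong) auto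
  then show ?case by (simp add: wt_count_Suc[OF assms] mult.commute)
qed

lemma card_wt_q_le_eq_sum: "card {u. u < q ^ n \<and> wt_q q n u \<le> r} = (\<Sum>s\<le>r. wt_count q n s)"
proof (induction r)
  case (Suc r)
  have "{u. u < q ^ n \<and> wt_q q n u \<le> Suc r}
      = {u. u < q ^ n \<and> wt_q q n u \<le> r} \<union> {u. u < q ^ n \<and> wt_q q n u = Suc r}"
    by auto
  then show ?case
    using Suc by (simp add: card_Un_disjoint disjoint_iff wt_count_def)
qed (simp add: wt_count_def)

lemma card_wt_q_ge_eq_card_wt_q_le:
  assumes q: "0 < q" and w: "w + r = n * (q - 1)"
  shows "card {u. u < q ^ n \<and> w \<le> wt_q q n u} = card {u. u < q ^ n \<and> wt_q q n u \<le> r}"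
proof -
  define c where "c u = q ^ n - 1 - u" for u
  have wt_c: "wt_q q n (c u) = n * (q - 1) - wt_q q n u" if "u < q ^ n" for u
    unfolding c_def using wt_q_complement[OF q that] .
  have "bij_betw c {u. u < q ^ n \<and> w \<le> wt_q q n u} {u. u < q ^ n \<and> wt_q q n u \<le> r}"
  proof (rule bij_betw_byWitness[where f' = c])
    show "c ` {u. u < q ^ n \<and> w \<le> wt_q q n u} \<subseteq> {u. u < q ^ n \<and> wt_q q n u \<le> r}"
      using wt_c w by (auto simp: c_def)
    show "c ` {u. u < q ^ n \<and> wt_q q n u \<le> r} \<subseteq> {u. u < q ^ n \<and> w \<le> wt_q q n u}"
      using wt_c w wt_q_le[OF q] by (auto simp: c_def)
  qed (auto simp: c_def)
  then show ?thesis by (rule bij_betw_same_card)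
qed


section \<open>Generating functions for digit sums\<close>

unbundle fps_syntax

definition digits_fps :: "nat \<Rightarrow> int fps" where
  "digits_fps q = Abs_fps (\<lambda>t. if t < q then 1 else 0)"

definition binomial_fps :: "nat \<Rightarrow> int fps" where
  "binomial_fps k = Abs_fps (\<lambda>t. int ((t + k) choose k))"

lemma digits_fps_nth: "digits_fps q $ t = (if t < q then 1 else 0)"
  by (simp add: digits_fps_def)

lemma binomial_fps_nth: "binomial_fps k $ t = int ((t + k) choose k)"
  by (simp add: binomial_fps_def)

lemma fps_nth_digits_fps_power:
  assumes q: "0 < q"
  shows "digits_fps q ^ n $ s = int (wt_count q n s)"
proof (induction n arbitrary: s)
  case 0
  then show ?case by (simp add: wt_count_0)
next
  case (Suc n)
  have "digits_fps q ^ Suc n $ s = (\<Sum>d=0..s. if d < q then int (wt_count q n (s - d)) else 0)"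
    unfolding power_Suc fps_mult_nth by (rule sum.cong) (auto simp: digits_fps_nth Suc.IH)
  also have "\<dots> = (\<Sum>d<q. if d \<le> s then int (wt_count q n (s - d)) else 0)"
    by (simp add: sum.If_cases Int_commute lessThan_def atLeast0AtMost atMost_def)
  finally show ?case by (simp add: wt_count_Suc[OF q] if_distrib cong: if_cong)
qed

lemma digits_fps_mult_one_minus_X:
  assumes "0 < q"
  shows "digits_fps q * (1 - fps_X) = 1 - fps_X ^ q"
  using assms by (intro fps_ext) (auto simp: digits_fps_nth right_diff_distrib nat.split_sels(1))

lemma binomial_fps_Suc_mult_one_minus_X: "binomial_fps (Suc k) * (1 - fps_X) = binomial_fps k"
proof (rule fps_ext)
  fix t
  show "(binomial_fps (Suc k) * (1 - fps_X)) $ t = binomial_fps k $ t"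
    by (cases t) (simp_all add: binomial_fps_nth right_diff_distrib)
qed

lemma binomial_fps_mult_one_minus_X_power: "binomial_fps k * (1 - fps_X) ^ Suc k = 1"
proof (induction k)
  case 0
  show ?case by (intro fps_ext) (simp add: binomial_fps_nth right_diff_distrib)
next
  case (Suc k)
  have "binomial_fps (Suc k) * (1 - fps_X) ^ Suc (Suc k)
      = (binomial_fps (Suc k) * (1 - fps_X)) * (1 - fps_X) ^ Suc k"
    by (simp only: power_Suc[of _ "Suc k"] mult.assoc)
  then show ?case by (simp only: binomial_fps_Suc_mult_one_minus_X Suc.IH)
qed

lemma fps_nth_one_minus_X_power_mult:
  "((1 - fps_X ^ q) ^ n * G) $ s
    = (\<Sum>i\<le>n. (-1) ^ i * int (n choose i) * (if q * i \<le> s then G $ (s - q * i) else 0))"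
proof -
  have neg_one_power: "(-1 :: int fps) ^ k = fps_const ((-1) ^ k)" for k
  proof (induction k)
    case (Suc k)
    have "(-1 :: int fps) ^ Suc k = - fps_const ((-1) ^ k)" by (simp add: Suc.IH)
    then show ?case by simp
  qed simp
  have summand: "of_nat c * (- (fps_X ^ q)) ^ k * 1 ^ (n - k) * G
      = fps_const ((-1) ^ k * int c) * (fps_X ^ (q * k) * G)" for c k
  proof -
    have "of_nat c * (- (fps_X ^ q)) ^ k * 1 ^ (n - k) * G = (of_nat c * (-1) ^ k) * ((fps_X ^ q) ^ k * G)"
      unfolding power_minus[of "fps_X ^ q"] power_one mult_1_right mult.assoc ..
    also have "(of_nat c * (-1) ^ k :: int fps) = fps_const ((-1) ^ k * int c)"
      unfolding neg_one_power fps_of_nat[symmetric] fps_const_mult[symmetric] by (simp add: mult.commute)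
    also have "(fps_X ^ q) ^ k = (fps_X ^ (q * k) :: int fps)" by (simp add: power_mult)
    finally show ?thesis .
  qed
  have "(1 - fps_X ^ q :: int fps) ^ n = (- (fps_X ^ q) + 1) ^ n" by simp
  also have "\<dots> = (\<Sum>k\<le>n. of_nat (n choose k) * (- (fps_X ^ q)) ^ k * 1 ^ (n - k))"
    by (rule binomial_ring)
  finally have expand: "(1 - fps_X ^ q :: int fps) ^ n
      = (\<Sum>k\<le>n. of_nat (n choose k) * (- (fps_X ^ q)) ^ k * 1 ^ (n - k))" .
  show ?thesis
    unfolding expand sum_distrib_right fps_sum_nth summand
    by (rule sum.cong) (auto simp: fps_X_power_mult_nth)
qed

lemma wt_count_formula:
  assumes q: "0 < q" and m: "0 < m"
  shows "int (wt_count q m A)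
    = (\<Sum>i\<le>m. (-1) ^ i * int (m choose i) *
        (if q * i \<le> A then int ((A - q * i + (m - 1)) choose (m - 1)) else 0))"
proof -
  have "digits_fps q ^ m = digits_fps q ^ m * (binomial_fps (m - 1) * (1 - fps_X) ^ m)"
    using binomial_fps_mult_one_minus_X_power[of "m - 1"] m by simp
  also have "\<dots> = (1 - fps_X ^ q) ^ m * binomial_fps (m - 1)"
    using digits_fps_mult_one_minus_X[OF q] by (simp add: power_mult_distrib[symmetric] mult_ac)
  finally have "int (wt_count q m A) = ((1 - fps_X ^ q) ^ m * binomial_fps (m - 1)) $ A"
    by (metis fps_nth_digits_fps_power[OF q])
  then show ?thesis
    by (simp add: fps_nth_one_minus_X_power_mult binomial_fps_nth cong: if_cong)
qed

lemma card_wt_q_le_formula: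
  assumes q: "0 < q"
  shows "int (card {u. u < q ^ n \<and> wt_q q n u \<le> r})
    = (\<Sum>i\<le>n. (-1) ^ i * int (n choose i) *
        (if q * i \<le> r then int ((r - q * i + n) choose n) else 0))"
proof -
  have B0: "binomial_fps 0 * (1 - fps_X) = 1"
    using binomial_fps_mult_one_minus_X_power[of 0] by simp
  have "digits_fps q ^ n * binomial_fps 0
      = digits_fps q ^ n * binomial_fps 0 * (binomial_fps n * (1 - fps_X) ^ Suc n)"
    by (simp only: binomial_fps_mult_one_minus_X_power mult_1_right)
  also have "\<dots> = (digits_fps q * (1 - fps_X)) ^ n * (binomial_fps 0 * (1 - fps_X)) * binomial_fps n"
    by (simp only: power_mult_distrib power_Suc mult_ac)
  also have "\<dots> = (1 - fps_X ^ q) ^ n * binomial_fps n"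
    by (simp only: digits_fps_mult_one_minus_X[OF q] B0 mult_1_right)
  finally have "(digits_fps q ^ n * binomial_fps 0) $ r = ((1 - fps_X ^ q) ^ n * binomial_fps n) $ r"
    by simp
  moreover have "(digits_fps q ^ n * binomial_fps 0) $ r = int (card {u. u < q ^ n \<and> wt_q q n u \<le> r})"
    by (simp add: fps_mult_nth binomial_fps_nth fps_nth_digits_fps_power[OF q] card_wt_q_le_eq_sum
        atLeast0AtMost)
  ultimately show ?thesis
    by (simp add: fps_nth_one_minus_X_power_mult binomial_fps_nth cong: if_cong)
qed

lemma binomZ_of_nat: "binomZ (int b + int k) (int b) = int ((b + k) choose k)"
proof -
  have "binomZ (int b + int k) (int b) = \<lfloor>real (b + k) gchoose b\<rfloor>"
    by (simp add: binomZ_def)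
  also have "real (b + k) gchoose b = real ((b + k) choose b)" by (simp only: binomial_gbinomial)
  finally show ?thesis using binomial_symmetric[of b "b + k"] by simp
qed

lemma binomZ_of_nat_diff:
  "binomZ (int a - int c + int k) (int a - int c) = (if c \<le> a then int ((a - c + k) choose k) else 0)"
proof (cases "c \<le> a")
  case True
  then show ?thesis using binomZ_of_nat[of "a - c" k] by simp
qed (simp add: binomZ_def)

lemma Sm_eq_0_if_neg:
  assumes "A < 0"
  shows "Sm q m A = 0"
proof -
  have "A - int i * int q < 0" for i
  proof -
    have "0 \<le> int i * int q" by simp
    then show ?thesis using assms by linarith
  qed
  then show ?thesis by (simp add: Sm_def binomZ_def)
qed

lemma Sm_of_nat:
  assumes "0 < q" "0 < m"
  shows "Sm q m (int a) = int (wt_count q m a)"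
proof -
  have "binomZ (int a - int i * int q + int m - 1) (int a - int i * int q)
      = (if q * i \<le> a then int ((a - q * i + (m - 1)) choose (m - 1)) else 0)" for i
  proof -
    have "int a - int i * int q + int m - 1 = int a - int (q * i) + int (m - 1)"
      "int a - int i * int q = int a - int (q * i)"
      using assms by simp_all
    then show ?thesis by (simp only: binomZ_of_nat_diff)
  qed
  then show ?thesis by (simp add: wt_count_formula[OF assms] Sm_def)
qed

lemma binomZ_sum_eq_card_wt_q_le:
  assumes "0 < q"
  shows "(\<Sum>i\<le>n. (-1) ^ i * int (n choose i) * binomZ (int n + int r - int i * int q) (int r - int i * int q))
    = int (card {u. u < q ^ n \<and> wt_q q n u \<le> r})"
proof -
  have "binomZ (int n + int r - int i * int q) (int r - int i * int q)
      = (if q * i \<le> r then int ((r - q * i + n) choose n) else 0)" for i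
  proof -
    have "int n + int r - int i * int q = int r - int (q * i) + int n"
      "int r - int i * int q = int r - int (q * i)"
      by simp_all
    then show ?thesis by (simp only: binomZ_of_nat_diff)
  qed
  then show ?thesis by (simp add: card_wt_q_le_formula[OF assms])
qed

section \<open>The Frobenius map on exponents\<close>

text \<open>Multiplying an exponent \<open>u < q\<^sup>n\<close> by \<open>q\<close> modulo \<open>q\<^sup>n - 1\<close> rotates its \<open>n\<close> base-\<open>q\<close>
  digits cyclically.\<close>
definition digit_rotate :: "nat \<Rightarrow> nat \<Rightarrow> nat \<Rightarrow> nat" where
  "digit_rotate q n u = (u mod q ^ (n - 1)) * q + u div q ^ (n - 1)"

lemma digit_mod_power:
  assumes "i < k" "0 < q"
  shows "digit q (a mod q ^ k) i = digit q a i"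
proof -
  have "a mod q ^ k = q ^ i * (a div q ^ i mod q ^ (k - i)) + a mod q ^ i"
    using mod_mult2_eq[of a "q ^ i" "q ^ (k - i)"] assms by (simp add: power_add[symmetric])
  then have "(a mod q ^ k) div q ^ i = a div q ^ i mod q ^ (k - i)" using assms by simp
  moreover have "q dvd q ^ (k - i)" using assms by simp
  ultimately show ?thesis by (simp add: digit_def mod_mod_cancel)
qed

lemma
  assumes q: "0 < q" and n: "0 < n" and u: "u < q ^ n"
  shows div_power_less: "u div q ^ (n - 1) < q"
    and digit_rotate_mod: "digit_rotate q n u mod q = u div q ^ (n - 1)"
    and digit_rotate_div: "digit_rotate q n u div q = u mod q ^ (n - 1)"
proof -
  have "u < q * q ^ (n - 1)" using u power_minus_mult[OF n, of q] by (simp add: mult.commute)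
  then show lt: "u div q ^ (n - 1) < q" by (rule less_mult_imp_div_less)
  show "digit_rotate q n u mod q = u div q ^ (n - 1)" using lt by (simp add: digit_rotate_def)
  show "digit_rotate q n u div q = u mod q ^ (n - 1)" using lt q by (simp add: digit_rotate_def)
qed

lemma digit_digit_rotate:
  assumes q: "0 < q" and n: "0 < n" and u: "u < q ^ n" and i: "i < n"
  shows "digit q (digit_rotate q n u) (Suc i mod n) = digit q u i"
proof (cases "Suc i < n")
  case True
  then show ?thesis
    using digit_mod_power[of i "n - 1" q u] q
    by (simp add: digit_Suc digit_rotate_div[OF q n u])
next
  case False
  then have "Suc i = n" using i by simp
  then have i_eq: "i = n - 1" and "Suc i mod n = 0" by auto
  then have "digit q (digit_rotate q n u) (Suc i mod n) = digit_rotate q n u mod q"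
    by (simp add: digit_0)
  also have "\<dots> = u div q ^ (n - 1)" by (rule digit_rotate_mod[OF q n u])
  also have "\<dots> = digit q u i" using div_power_less[OF q n u] by (simp add: digit_def i_eq)
  finally show ?thesis .
qed

lemma sum_Suc_mod: "0 < n \<Longrightarrow> (\<Sum>i<n. g (Suc i mod n)) = (\<Sum>i<n. g i)"
proof (induction n rule: nat.induct)
  case (Suc n)
  have "(\<Sum>i<Suc n. g (Suc i mod Suc n)) = (\<Sum>i<n. g (Suc i)) + g 0"
    by simp
  also have "\<dots> = (\<Sum>i<Suc n. g i)" by (simp only: sum.lessThan_Suc_shift add.commute)
  finally show ?case .
qed simp

lemma sum_digits_digit_rotate:
  assumes q: "0 < q" and n: "0 < n" and u: "u < q ^ n"
  shows "(\<Sum>j<n. f j (digit q (digit_rotate q n u) j)) = (\<Sum>i<n. f (Suc i mod n) (digit q u i))"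
  using sum_Suc_mod[OF n, of "\<lambda>j. f j (digit q (digit_rotate q n u) j)"]
  by (simp add: digit_digit_rotate[OF q n u])

lemma wt_q_digit_rotate:
  "0 < q \<Longrightarrow> 0 < n \<Longrightarrow> u < q ^ n \<Longrightarrow> wt_q q n (digit_rotate q n u) = wt_q q n u"
  unfolding wt_q_def using sum_digits_digit_rotate[of q n u "\<lambda>_ d. d"] by simp

lemma odd_Suc_mod_iff:
  assumes "even n" "i < n"
  shows "odd (Suc i mod n) \<longleftrightarrow> even i"
proof (cases "Suc i < n")
  case False
  then have "Suc i = n" using assms(2) by simp
  then show ?thesis using assms(1) by auto
qed simp

lemma O_q_digit_rotate:
  assumes q: "0 < q" and n: "0 < n" and u: "u < q ^ n" and "even n"
  shows "O_q q n (digit_rotate q n u) = E_q q n u"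
  unfolding O_q_eq_sum E_q_eq_sum sum_digits_digit_rotate[OF q n u, of "\<lambda>j d. if odd j then d else 0"]
  using odd_Suc_mod_iff[OF \<open>even n\<close>] by (intro sum.cong) auto

lemma E_q_digit_rotate:
  assumes q: "0 < q" and n: "0 < n" and u: "u < q ^ n" and "even n"
  shows "E_q q n (digit_rotate q n u) = O_q q n u"
  unfolding O_q_eq_sum E_q_eq_sum sum_digits_digit_rotate[OF q n u, of "\<lambda>j d. if even j then d else 0"]
  using odd_Suc_mod_iff[OF \<open>even n\<close>] by (intro sum.cong) auto

lemma digit_rotate_less:
  assumes q: "0 < q" and n: "0 < n" and u: "u < q ^ n"
  shows "digit_rotate q n u < q ^ n"
proof -
  have "digit_rotate q n u < (u mod q ^ (n - 1) + 1) * q"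
    using div_power_less[OF q n u] by (simp add: digit_rotate_def)
  also have "\<dots> \<le> q ^ (n - 1) * q"
    using q by (intro mult_right_mono) (simp_all add: Suc_le_eq)
  also have "\<dots> = q ^ n" by (rule power_minus_mult[OF n])
  finally show ?thesis .
qed

lemma digit_rotate_pos:
  assumes "0 < u" "0 < q"
  shows "0 < digit_rotate q n u"
  using assms div_mult_mod_eq[of u "q ^ (n - 1)"] by (auto simp: digit_rotate_def)

lemma power_digit_rotate:
  fixes \<alpha> :: "'a::field"
  assumes n: "0 < n" and \<alpha>: "\<alpha> ^ q ^ n = \<alpha>"
  shows "\<alpha> ^ digit_rotate q n u = (\<alpha> ^ u) ^ q"
proof -
  define P where "P = q ^ (n - 1)"
  have qn: "P * q = q ^ n" unfolding P_def by (rule power_minus_mult[OF n])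
  have "u * q = (u mod P) * q + (u div P) * (P * q)"
    by (metis div_mult_mod_eq add.commute mult.assoc distrib_right)
  then have "(\<alpha> ^ u) ^ q = \<alpha> ^ ((u mod P) * q) * (\<alpha> ^ q ^ n) ^ (u div P)"
    by (simp add: power_mult[symmetric] power_add qn mult.commute)
  then show ?thesis by (simp add: \<alpha> digit_rotate_def P_def power_add)
qed


section \<open>The zero set of the code\<close>

lemma finite_M_set: "finite (M_set q m r)"
  by (rule finite_subset[of _ "{..m * (q - 1)}"]) (auto simp: M_set_def)

locale zero_set_setting = subfield_extension K q n for K :: "'a::{field,finite} set" and q n +
  fixes \<alpha> :: 'a and m r :: nat and I :: "nat set"
  assumes primitive: "primitive_elem \<alpha>" and n_eq: "n = 2 * m"
    and r_less: "r < n * (q - 1)" and I_subset: "I \<subseteq> M_set q m r"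
begin

definition W :: nat where "W = n * (q - 1) - r"

definition low_exps :: "nat set" where
  "low_exps = {u. 0 < u \<and> u < q ^ n \<and> wt_q q n u < W}"

definition Theta_exps :: "nat \<Rightarrow> nat set" where
  "Theta_exps k = {u. u < q ^ n \<and> wt_q q n u = W \<and> \<bar>int (O_q q n u) - int (E_q q n u)\<bar> = int k}"

definition zero_exps :: "nat set" where
  "zero_exps = low_exps \<union> (\<Union>k\<in>M_set q m r - I. Theta_exps k)"

lemma q_pos: "0 < q"
  using q_ge_2 by simp

lemma m_pos: "0 < m"
  using n_pos n_eq by simp

lemma W_pos: "0 < W"
  using r_less by (simp add: W_def)

lemma int_W: "int n * (int q - 1) - int r = int W"
  using r_less q_ge_2 by (simp add: W_def of_nat_diff)

lemma le_N_iff: "u \<le> N \<longleftrightarrow> u < q ^ n"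
  using zero_less_power[OF q_pos, of n] by linarith

lemma alpha_nonzero: "\<alpha> \<noteq> 0"
proof
  assume "\<alpha> = 0"
  have "x \<in> {0, 1}" for x :: 'a
  proof (cases "x = 0")
    case False
    then obtain u where "x = \<alpha> ^ u" using primitive by (auto simp: primitive_elem_def)
    then show ?thesis using \<open>\<alpha> = 0\<close> by (simp add: power_0_left)
  qed simp
  then have "card (UNIV :: 'a set) \<le> card {0::'a, 1}" by (intro card_mono) auto
  then have "card (UNIV :: 'a set) \<le> 2" by simp
  moreover have "2 * 2 \<le> q ^ 2" using mult_le_mono[OF q_ge_2 q_ge_2] by (simp add: power2_eq_square)
  moreover have "q ^ 2 \<le> q ^ n" using q_ge_2 n_eq m_pos by (intro power_increasing) auto
  ultimately show False using card_UNIV by simp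
qed

lemma alpha_power_N: "\<alpha> ^ N = 1"
  using mult_closed_power_card_eq_1[of "UNIV - {0}" \<alpha>] alpha_nonzero card_nonzero by simp

lemma alpha_power_image: "(\<lambda>u. \<alpha> ^ u) ` {1..N} = UNIV - {0}"
proof (intro equalityI subsetI)
  fix x :: 'a assume "x \<in> UNIV - {0}"
  then obtain u where x: "x = \<alpha> ^ u" using primitive by (auto simp: primitive_elem_def)
  define v where "v = (if u mod N = 0 then N else u mod N)"
  have "\<alpha> ^ u = (\<alpha> ^ N) ^ (u div N) * \<alpha> ^ (u mod N)"
    by (simp add: power_mult[symmetric] power_add[symmetric])
  then have "x = \<alpha> ^ v" using x alpha_power_N by (simp add: v_def)
  moreover have "v \<in> {1..N}" using N_pos by (auto simp: v_def)
  ultimately show "x \<in> (\<lambda>u. \<alpha> ^ u) ` {1..N}" by blast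
qed (use alpha_nonzero in auto)

lemma inj_on_alpha_power: "inj_on (\<lambda>u. \<alpha> ^ u) {1..N}"
proof (rule eq_card_imp_inj_on)
  show "card ((\<lambda>u. \<alpha> ^ u) ` {1..N}) = card {1..N}"
    unfolding alpha_power_image card_nonzero by simp
qed simp

lemma Z_rI_eq_image: "Z_rI q m n \<alpha> r I = (\<lambda>u. \<alpha> ^ u) ` zero_exps"
proof -
  have "Z_set q n \<alpha> r = (\<lambda>u. \<alpha> ^ u) ` low_exps"
    unfolding Z_set_def low_exps_def le_N_iff int_W by auto
  moreover have "Theta q n \<alpha> r k = (\<lambda>u. \<alpha> ^ u) ` Theta_exps k" for k
    unfolding Theta_def Theta_exps_def le_N_iff int_W by auto
  ultimately show ?thesis by (simp add: Z_rI_def zero_exps_def image_Un image_UN)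
qed

lemma zero_exps_subset: "zero_exps \<subseteq> {1..N}"
proof
  fix u assume "u \<in> zero_exps"
  then have "u < q ^ n" and "0 < u \<or> wt_q q n u = W"
    by (auto simp: zero_exps_def low_exps_def Theta_exps_def)
  moreover have "wt_q q n 0 \<noteq> W" using W_pos wt_q_zero[of q n] by simp
  ultimately show "u \<in> {1..N}" unfolding atLeastAtMost_iff le_N_iff by (cases "u = 0") auto
qed

lemma zero_notin_Z_rI: "0 \<notin> Z_rI q m n \<alpha> r I"
  using alpha_nonzero by (auto simp: Z_rI_eq_image)

lemma card_Z_rI: "card (Z_rI q m n \<alpha> r I) = card low_exps + (\<Sum>k\<in>M_set q m r - I. card (Theta_exps k))"
proof -
  have fin: "finite (M_set q m r - I)" using finite_M_set by simp
  have "card (Z_rI q m n \<alpha> r I) = card zero_exps"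
    unfolding Z_rI_eq_image by (rule card_image[OF inj_on_subset[OF inj_on_alpha_power zero_exps_subset]])
  also have "\<dots> = card low_exps + card (\<Union>k\<in>M_set q m r - I. Theta_exps k)"
    unfolding zero_exps_def using fin
    by (intro card_Un_disjoint) (auto simp: low_exps_def Theta_exps_def)
  also have "card (\<Union>k\<in>M_set q m r - I. Theta_exps k) = (\<Sum>k\<in>M_set q m r - I. card (Theta_exps k))"
    using fin by (intro card_UN_disjoint) (auto simp: Theta_exps_def)
  finally show ?thesis .
qed

lemma card_Z_rI_le: "card (Z_rI q m n \<alpha> r I) \<le> N"
  using card_mono[of "UNIV - {0}" "Z_rI q m n \<alpha> r I"] zero_notin_Z_rI card_nonzero by auto

text \<open>For even \<open>n\<close> the digit rotation induced by Frobenius swaps \<open>O(u)\<close> and \<open>E(u)\<close>, which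
  leaves \<open>|O(u) - E(u)|\<close> unchanged.\<close>
lemma frobenius_closed_Z_rI: "frobenius_closed (Z_rI q m n \<alpha> r I)"
  unfolding frobenius_closed_def Z_rI_eq_image
proof (rule ballI, elim imageE)
  fix \<beta> u assume \<beta>: "\<beta> = \<alpha> ^ u" and u: "u \<in> zero_exps"
  have u_less: "u < q ^ n" using zero_exps_subset u unfolding le_N_iff[symmetric] by auto
  define v where "v = digit_rotate q n u"
  have "\<beta> ^ q = \<alpha> ^ v"
    unfolding \<beta> v_def by (rule power_digit_rotate[OF n_pos power_q_power_n, symmetric])
  moreover have "v \<in> zero_exps"
  proof -
    have even: "even n" using n_eq by simp
    have "wt_q q n v = wt_q q n u" "O_q q n v = E_q q n u" "E_q q n v = O_q q n u"
      using wt_q_digit_rotate O_q_digit_rotate[OF _ _ _ even] E_q_digit_rotate[OF _ _ _ even]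
        q_pos n_pos u_less by (simp_all add: v_def)
    moreover have "v < q ^ n" "0 < u \<Longrightarrow> 0 < v"
      using digit_rotate_less[OF q_pos n_pos u_less] digit_rotate_pos[OF _ q_pos]
      by (simp_all add: v_def)
    ultimately show ?thesis
      using u by (auto simp: zero_exps_def low_exps_def Theta_exps_def abs_minus_commute)
  qed
  ultimately show "\<beta> ^ q \<in> (\<lambda>u. \<alpha> ^ u) ` zero_exps" by blast
qed

lemma code_dim_C_code: "code_dim K (C_code K q m n \<alpha> r I) = N - card (Z_rI q m n \<alpha> r I)"
  unfolding C_code_def
  by (rule code_dim_extend_cyclic_code[OF frobenius_closed_Z_rI zero_notin_Z_rI])

lemma card_low_exps: "card low_exps + card {u. u < q ^ n \<and> wt_q q n u \<le> r} = N"
proof -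
  define high where "high = {u. u < q ^ n \<and> W \<le> wt_q q n u}"
  have "0 \<notin> high" using W_pos wt_q_zero[of q n] by (simp add: high_def)
  have cover: "{1..N} = low_exps \<union> high"
  proof (intro equalityI subsetI)
    fix u assume "u \<in> {1..N}"
    then have "0 < u" "u < q ^ n" unfolding atLeastAtMost_iff le_N_iff by auto
    then show "u \<in> low_exps \<union> high" by (auto simp: low_exps_def high_def)
  next
    fix u assume u: "u \<in> low_exps \<union> high"
    have "u \<noteq> 0"
    proof
      assume "u = 0"
      with u \<open>0 \<notin> high\<close> show False by (simp add: low_exps_def)
    qed
    moreover have "u < q ^ n" using u by (auto simp: low_exps_def high_def)
    ultimately show "u \<in> {1..N}" unfolding atLeastAtMost_iff le_N_iff by simp
  qed
  have "card low_exps + card high = card (low_exps \<union> high)"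
    by (rule card_Un_disjoint[symmetric]) (auto simp: low_exps_def high_def)
  also have "\<dots> = N" unfolding cover[symmetric] by simp
  finally have "card low_exps + card high = N" .
  moreover have "card high = card {u. u < q ^ n \<and> wt_q q n u \<le> r}"
    unfolding high_def using r_less by (intro card_wt_q_ge_eq_card_wt_q_le[OF q_pos]) (simp add: W_def)
  ultimately show ?thesis by simp
qed

lemma even_W_plus:
  assumes "k \<in> M_set q m r"
  shows "even (W + k)"
proof -
  have "W + r = n * (q - 1)" using r_less by (simp add: W_def)
  moreover have "even (n * (q - 1))" using n_eq by simp
  moreover have "even k \<longleftrightarrow> even r" using assms by (simp add: M_set_def)
  ultimately show ?thesis by (metis even_add)
qed

lemma Theta_exps_eq: "Theta_exps k
    = {u. u < q ^ n \<and> E_q q n u + O_q q n u = W \<and> \<bar>int (O_q q n u) - int (E_q q n u)\<bar> = int k}"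
  by (simp add: Theta_exps_def wt_q_eq_O_q_plus_E_q add.commute)

lemma even_odd_count_split: "even_odd_count q n a b = wt_count q m a * wt_count q m b"
  using even_odd_count_eq_wt_count_mult[OF q_pos, of n a b] n_eq by simp

text \<open>\<open>E(u) + O(u) = W\<close> and \<open>|O(u) - E(u)| = k\<close> leave two choices of \<open>(E(u), O(u))\<close> if \<open>k > 0\<close>,
  each counted by a product of two digit-sum counts over \<open>m\<close> positions.\<close>
lemma card_Theta_exps_pos:
  assumes k: "k \<in> M_set q m r" "0 < k"
  shows "int (card (Theta_exps k)) = 2 * Sm q m ((int W - int k) div 2) * Sm q m ((int W + int k) div 2)"
proof (cases "k \<le> W")
  case True
  have "\<exists>a. W = 2 * a + k" using True even_W_plus[OF k(1)] by presburger
  then obtain a where a: "W = 2 * a + k" by blast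
  have split: "Theta_exps k = {u. u < q ^ n \<and> E_q q n u = a \<and> O_q q n u = a + k}
      \<union> {u. u < q ^ n \<and> E_q q n u = a + k \<and> O_q q n u = a}"
    unfolding Theta_exps_eq a by auto
  have "card (Theta_exps k) = even_odd_count q n a (a + k) + even_odd_count q n (a + k) a"
    unfolding split even_odd_count_def using k(2) by (intro card_Un_disjoint) auto
  moreover have "(int W - int k) div 2 = int a" "(int W + int k) div 2 = int (a + k)"
    using a by simp_all
  ultimately show ?thesis
    using Sm_of_nat[OF q_pos m_pos, of a] Sm_of_nat[OF q_pos m_pos, of "a + k"]
    by (simp add: even_odd_count_split)
next
  case False
  then have "Theta_exps k = {}" "(int W - int k) div 2 < 0" by (auto simp: Theta_exps_eq)
  then show ?thesis by (simp add: Sm_eq_0_if_neg)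
qed

lemma card_Theta_exps_0:
  assumes "0 \<in> M_set q m r"
  shows "int (card (Theta_exps 0)) = Sm q m (int W div 2) ^ 2"
proof -
  obtain a where a: "W = 2 * a" using even_W_plus[OF assms] by auto
  have "Theta_exps 0 = {u. u < q ^ n \<and> E_q q n u = a \<and> O_q q n u = a}"
    unfolding Theta_exps_eq a by auto
  then have "card (Theta_exps 0) = even_odd_count q n a a" by (simp add: even_odd_count_def)
  then show ?thesis by (simp add: a even_odd_count_split Sm_of_nat[OF q_pos m_pos] power2_eq_square)
qed

lemma sum_card_Theta_exps:
  "(\<Sum>k\<in>M_set q m r - I. int (card (Theta_exps k)))
    = 2 * (\<Sum>k\<in>M_set q m r - I - {0}. Sm q m ((int W - int k) div 2) * Sm q m ((int W + int k) div 2))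
      + (if 0 \<in> M_set q m r - I then 1 else 0) * Sm q m (int W div 2) ^ 2"
proof -
  have pos: "(\<Sum>k\<in>M_set q m r - I - {0}. int (card (Theta_exps k)))
      = 2 * (\<Sum>k\<in>M_set q m r - I - {0}. Sm q m ((int W - int k) div 2) * Sm q m ((int W + int k) div 2))"
    by (simp add: sum_distrib_left card_Theta_exps_pos mult.assoc)
  show ?thesis
  proof (cases "0 \<in> M_set q m r - I")
    case True
    then show ?thesis
      using True finite_M_set pos card_Theta_exps_0 by (simp add: sum.remove[of _ 0])
  next
    case False
    then have "M_set q m r - I - {0} = M_set q m r - I" by blast
    with pos show ?thesis unfolding if_not_P[OF False] by simp
  qed
qed

end

theorem theorem3p9:
  fixes K :: "'a::{field,finite} set" and \<alpha> :: 'a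
    and p l q m n r :: nat and I :: "nat set"
  assumes "prime p" and "0 < l" and "q = p ^ l"
    and "1 \<le> m" and "n = 2 * m"
    and "card (UNIV :: 'a set) = q ^ n"
    and "is_subfield K" and "card K = q"
    and "primitive_elem \<alpha>"
    and "r < n * (q - 1)"
    and "I \<subseteq> M_set q m r"
  shows "int (code_dim K (C_code K q m n \<alpha> r I)) =
      (\<Sum>i\<le>n. (-1) ^ i * int (n choose i) *
         binomZ (int n + int r - int i * int q) (int r - int i * int q))
    - 2 * (\<Sum>k\<in>(M_set q m r - I) - {0}.
         Sm q m ((int n * (int q - 1) - int r - int k) div 2) *
         Sm q m ((int n * (int q - 1) - int r + int k) div 2))
    - (if 0 \<in> M_set q m r - I then 1 else 0) *
         (Sm q m ((int n * (int q - 1) - int r) div 2)) ^ 2"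
proof -
  interpret zero_set_setting K q n \<alpha> m r I
  proof unfold_locales
    show "\<exists>p l. prime p \<and> q = p ^ l" using assms(1,3) by blast
  qed (use assms in auto)
  have "int (code_dim K (C_code K q m n \<alpha> r I)) = int N - int (card (Z_rI q m n \<alpha> r I))"
    using card_Z_rI_le by (simp add: code_dim_C_code of_nat_diff)
  also have "\<dots> = int (card {u. u < q ^ n \<and> wt_q q n u \<le> r})
      - (\<Sum>k\<in>M_set q m r - I. int (card (Theta_exps k)))"
    using card_low_exps[symmetric] by (simp add: card_Z_rI)
  finally show ?thesis
    unfolding int_W binomZ_sum_eq_card_wt_q_le[OF q_pos] sum_card_Theta_exps by simp
qed

end
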